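(* Let $(\Omega,+)$ be a group and $x,a,y,b,z\subseteq\Omega$ arbitrary subsets. Then: (1) $\Gamma(b,z,y,x,a)=-\Gamma(x,a,y,b,z)$, $\Gamma(z,b,y,a,x)=\check\Gamma(x,a,y,b,z)$ and $\Gamma(a,x,y,z,b)=-\check\Gamma(x,a,y,b,z)$; and if $x,a,y,b,z$ are all symmetric subsets, then $\Gamma(x,a,y,b,z)=\Gamma(a,x,y,z,b)$. (2) For each $\sigma$ in the Klein group $\{\mathrm{id},(\xi\omega)(\zeta\eta),(\xi\eta)(\zeta\omega),(\xi\zeta)(\eta\omega)\}$ of permutations of the six letters, one has $\sigma.\mathbf\Gamma=\mathbf\Gamma^{s}$ for a sign vector $s$ whose entries in the $\xi,\zeta,\eta,\omega$ positions are all $+1$; i.e. if signed versions differing only by sign changes in $\alpha$ or $\beta$ are regarded as equivalent, the equivalence class of $\mathbf\Gamma$ is invariant under this Klein group.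
   Context: $(\Omega,+)$ is a group written additively but not necessarily abelian. $\Gamma(x,a,y,b,z)=\{\omega:\exists\alpha\in a,\beta\in b:\ \alpha+\omega+\beta\in y,\ \alpha+\omega\in z,\ \omega+\beta\in x\}$, $\check\Gamma(x,a,y,b,z)=\{\omega:\exists\alpha\in a,\beta\in b:\ \beta+\omega+\alpha\in y,\ \omega+\alpha\in z,\ \beta+\omega\in x\}$; for a subset $u$, $-u=\{-\mu:\mu\in u\}$, and $u$ is symmetric if $-u=u$. The structure space is $\mathbf\Gamma=\{(\xi,\zeta,\alpha,\beta,\eta,\omega)\in\Omega^6:\ \eta=\alpha+\omega+\beta,\ \zeta=\alpha+\omega,\ \xi=\omega+\beta\}$. For a sign vector $s=(s_1,\dots,s_6)\in\{\pm1\}^6$, $\mathbf\Gamma^s=\{(\xi,\zeta,\alpha,\beta,\eta,\omega): (s_1\xi,s_2\zeta,s_3\alpha,s_4\beta,s_5\eta,s_6\omega)\in\mathbf\Gamma\}$. For a permutation $\sigma$ of the letters $\{\xi,\zeta,\alpha,\beta,\eta,\omega\}$, $\sigma.\mathbf\Gamma$ is the set of $(\xi,\zeta,\alpha,\beta,\eta,\omega)\in\Omega^6$ satisfying the equations obtained by renaming each letter $v$ to $\sigma(v)$, namely $\sigma(\eta)=\sigma(\alpha)+\sigma(\omega)+\sigma(\beta)$, $\sigma(\zeta)=\sigma(\alpha)+\sigma(\omega)$, $\sigma(\xi)=\sigma(\omega)+\sigma(\beta)$. *)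

theory Defs
  imports Main
begin

definition Gam :: "'a::group_add set \<Rightarrow> 'a set \<Rightarrow> 'a set \<Rightarrow> 'a set \<Rightarrow> 'a set \<Rightarrow> 'a set" where
  "Gam x a y b z = {\<omega>. \<exists>\<alpha>\<in>a. \<exists>\<beta>\<in>b. \<alpha> + \<omega> + \<beta> \<in> y \<and> \<alpha> + \<omega> \<in> z \<and> \<omega> + \<beta> \<in> x}"

definition Gam_check :: "'a::group_add set \<Rightarrow> 'a set \<Rightarrow> 'a set \<Rightarrow> 'a set \<Rightarrow> 'a set \<Rightarrow> 'a set" where
  "Gam_check x a y b z = {\<omega>. \<exists>\<alpha>\<in>a. \<exists>\<beta>\<in>b. \<beta> + \<omega> + \<alpha> \<in> y \<and> \<omega> + \<alpha> \<in> z \<and> \<beta> + \<omega> \<in> x}"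

text \<open>Negation of a subset: -u = {-mu. mu in u}, written explicitly as an image
  (on sets, plain uminus would be the complement).\<close>

definition neg_set :: "'a::group_add set \<Rightarrow> 'a set" where
  "neg_set u = uminus ` u"

definition symmetric_set :: "'a::group_add set \<Rightarrow> bool" where
  "symmetric_set u \<longleftrightarrow> neg_set u = u"

text \<open>The six letters; 6-tuples in Omega^6 are represented as functions letter => Omega.\<close>

datatype letter = Xi | Zeta | Alpha | Beta | Eta | Omega

definition GammaS :: "(letter \<Rightarrow> 'a::group_add) set" where
  "GammaS = {p. p Eta = p Alpha + p Omega + p Beta \<and> p Zeta = p Alpha + p Omega
                \<and> p Xi = p Omega + p Beta}"

definition sign_vec :: "(letter \<Rightarrow> int) \<Rightarrow> bool" where
  "sign_vec s \<longleftrightarrow> (\<forall>v. s v = 1 \<or> s v = -1)"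

definition apply_sign :: "(letter \<Rightarrow> int) \<Rightarrow> (letter \<Rightarrow> 'a::group_add) \<Rightarrow> letter \<Rightarrow> 'a" where
  "apply_sign s p v = (if s v = 1 then p v else - p v)"

definition GammaS_signed :: "(letter \<Rightarrow> int) \<Rightarrow> (letter \<Rightarrow> 'a::group_add) set" where
  "GammaS_signed s = {p. apply_sign s p \<in> GammaS}"

text \<open>sigma.Gamma: the tuples satisfying the defining equations with each letter v renamed to sigma v.\<close>

definition GammaS_perm :: "(letter \<Rightarrow> letter) \<Rightarrow> (letter \<Rightarrow> 'a::group_add) set" where
  "GammaS_perm \<sigma> = {p. p \<circ> \<sigma> \<in> GammaS}"

definition sw2 :: "letter \<Rightarrow> letter \<Rightarrow> letter \<Rightarrow> letter \<Rightarrow> letter \<Rightarrow> letter" where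
  "sw2 u v w t l = (if l = u then v else if l = v then u
                    else if l = w then t else if l = t then w else l)"

definition klein :: "(letter \<Rightarrow> letter) set" where
  "klein = {id, sw2 Xi Omega Zeta Eta, sw2 Xi Eta Zeta Omega, sw2 Xi Zeta Eta Omega}"

end

theory Submission
  imports Defs
begin

text \<open>Two changes of variables in the defining condition of \<open>Gam\<close> do all the work.
  Replacing \<open>\<omega>\<close> by \<open>-\<omega>\<close> and the witnesses \<open>\<alpha>, \<beta>\<close> by \<open>\<alpha> + \<omega>, \<omega> + \<beta>\<close> exchanges the
  outer sets; negating the relation \<open>\<alpha> + \<omega> + \<beta> \<in> y\<close> reverses the order of the summands
  and replaces every set by its negative, which is invisible for symmetric sets. Both
  substitutions are involutions, so one inclusion each suffices. Each nontrivial element of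
  the Klein group merely moves \<open>\<alpha>\<close> or \<open>\<beta>\<close> to the other side of the defining equations,
  which flips their signs.\<close>

lemma mem_neg_set_iff: "w \<in> neg_set S \<longleftrightarrow> - (w::'a::group_add) \<in> S"
  unfolding neg_set_def by (metis image_iff minus_minus)

lemma neg_set_neg_set [simp]: "neg_set (neg_set (S::'a::group_add set)) = S"
  by (auto simp: mem_neg_set_iff)

lemma neg_set_subset_iff: "neg_set A \<subseteq> B \<longleftrightarrow> A \<subseteq> neg_set (B::'a::group_add set)"
  by (metis neg_set_def image_mono neg_set_neg_set)

lemma Gam_check_eq_Gam_reversed: "Gam_check x a y b z = Gam z b y a x"
  unfolding Gam_def Gam_check_def by blast

lemma neg_set_Gam_subset_swap: "neg_set (Gam x a y b z) \<subseteq> Gam b z y x (a::'a::group_add set)"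
proof
  fix w assume "w \<in> neg_set (Gam x a y b z)"
  then obtain \<alpha> \<beta> where "\<alpha> \<in> a" "\<beta> \<in> b" "\<alpha> + - w + \<beta> \<in> y" "\<alpha> + - w \<in> z" "- w + \<beta> \<in> x"
    by (auto simp: mem_neg_set_iff Gam_def)
  moreover have "(\<alpha> + - w) + w + (- w + \<beta>) = \<alpha> + - w + \<beta>" "(\<alpha> + - w) + w = \<alpha>" "w + (- w + \<beta>) = \<beta>"
    by (simp_all add: add.assoc flip: add_uminus_conv_diff)
  ultimately show "w \<in> Gam b z y x a"
    unfolding Gam_def by (intro CollectI bexI[of _ "\<alpha> + - w"] bexI[of _ "- w + \<beta>"]) simp_all
qed

lemma Gam_swap: "Gam b z y x a = neg_set (Gam x a y b (z::'a::group_add set))"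
proof (rule subset_antisym)
  show "Gam b z y x a \<subseteq> neg_set (Gam x a y b z)"
    using neg_set_Gam_subset_swap[of b z y x a] by (simp add: neg_set_subset_iff)
qed (simp add: neg_set_subset_iff [symmetric] neg_set_Gam_subset_swap)

lemma neg_set_Gam_subset_invert:
  "neg_set (Gam x a y b z) \<subseteq> Gam (neg_set z) (neg_set b) (neg_set y) (neg_set a) (neg_set (x::'a::group_add set))"
proof
  fix w assume "w \<in> neg_set (Gam x a y b z)"
  then obtain \<alpha> \<beta> where "\<alpha> \<in> a" "\<beta> \<in> b" "\<alpha> + - w + \<beta> \<in> y" "\<alpha> + - w \<in> z" "- w + \<beta> \<in> x"
    by (auto simp: mem_neg_set_iff Gam_def)
  moreover have "- (- \<beta> + w + - \<alpha>) = \<alpha> + - w + \<beta>" "- (- \<beta> + w) = - w + \<beta>" "- (w + - \<alpha>) = \<alpha> + - w"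
    by (simp_all add: minus_add add.assoc flip: add_uminus_conv_diff)
  ultimately show "w \<in> Gam (neg_set z) (neg_set b) (neg_set y) (neg_set a) (neg_set x)"
    unfolding Gam_def
    by (intro CollectI bexI[of _ "- \<beta>"] bexI[of _ "- \<alpha>"]) (simp_all add: mem_neg_set_iff)
qed

lemma Gam_invert:
  "Gam (neg_set z) (neg_set b) (neg_set y) (neg_set a) (neg_set x) = neg_set (Gam x a y b (z::'a::group_add set))"
proof (rule subset_antisym)
  show "Gam (neg_set z) (neg_set b) (neg_set y) (neg_set a) (neg_set x) \<subseteq> neg_set (Gam x a y b z)"
    using neg_set_Gam_subset_invert[of "neg_set z" "neg_set b" "neg_set y" "neg_set a" "neg_set x"]
    by (simp add: neg_set_subset_iff)
qed (rule neg_set_Gam_subset_invert)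

lemma Gam_transpose_if_symmetric:
  assumes "symmetric_set x" "symmetric_set a" "symmetric_set y" "symmetric_set b" "symmetric_set z"
  shows "Gam x a y b z = Gam a x y z (b::'a::group_add set)"
proof -
  have "Gam z b y a x = neg_set (Gam x a y b z)"
    using Gam_invert[of x a y b z] assms by (simp add: symmetric_set_def)
  then show ?thesis
    using Gam_swap[of z b y a x] by (metis neg_set_neg_set)
qed

lemma GammaS_perm_id: "GammaS_perm id = (GammaS_signed (\<lambda>_. 1) :: (letter \<Rightarrow> 'a::group_add) set)"
  by (simp add: GammaS_perm_def GammaS_signed_def apply_sign_def [abs_def])

lemma GammaS_perm_Xi_Omega_Zeta_Eta:
  "GammaS_perm (sw2 Xi Omega Zeta Eta)
     = (GammaS_signed (\<lambda>v. if v = Beta then -1 else 1) :: (letter \<Rightarrow> 'a::group_add) set)"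
  by (rule set_eqI)
     (auto simp: GammaS_perm_def GammaS_signed_def GammaS_def apply_sign_def sw2_def
                 add.assoc simp flip: add_uminus_conv_diff)

lemma GammaS_perm_Xi_Eta_Zeta_Omega:
  "GammaS_perm (sw2 Xi Eta Zeta Omega)
     = (GammaS_signed (\<lambda>v. if v = Alpha then -1 else 1) :: (letter \<Rightarrow> 'a::group_add) set)"
  by (rule set_eqI)
     (auto simp: GammaS_perm_def GammaS_signed_def GammaS_def apply_sign_def sw2_def
                 add.assoc simp flip: add_uminus_conv_diff)

lemma GammaS_perm_Xi_Zeta_Eta_Omega:
  "GammaS_perm (sw2 Xi Zeta Eta Omega)
     = (GammaS_signed (\<lambda>v. if v = Alpha \<or> v = Beta then -1 else 1) :: (letter \<Rightarrow> 'a::group_add) set)"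
  by (rule set_eqI)
     (auto simp: GammaS_perm_def GammaS_signed_def GammaS_def apply_sign_def sw2_def
                 add.assoc simp flip: add_uminus_conv_diff)

lemma klein_GammaS_perm_signed:
  assumes "\<sigma> \<in> klein"
  shows "\<exists>s. sign_vec s \<and> s Xi = 1 \<and> s Zeta = 1 \<and> s Eta = 1 \<and> s Omega = 1
           \<and> (GammaS_perm \<sigma> :: (letter \<Rightarrow> 'a::group_add) set) = GammaS_signed s"
  using assms unfolding klein_def
proof (elim insertE emptyE)
  assume "\<sigma> = id"
  then show ?thesis
    by (intro exI[of _ "\<lambda>_. 1"]) (simp add: sign_vec_def GammaS_perm_id)
next
  assume "\<sigma> = sw2 Xi Omega Zeta Eta"
  then show ?thesis
    by (intro exI[of _ "\<lambda>v. if v = Beta then -1 else 1"])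
       (simp add: sign_vec_def GammaS_perm_Xi_Omega_Zeta_Eta)
next
  assume "\<sigma> = sw2 Xi Eta Zeta Omega"
  then show ?thesis
    by (intro exI[of _ "\<lambda>v. if v = Alpha then -1 else 1"])
       (simp add: sign_vec_def GammaS_perm_Xi_Eta_Zeta_Omega)
next
  assume "\<sigma> = sw2 Xi Zeta Eta Omega"
  then show ?thesis
    by (intro exI[of _ "\<lambda>v. if v = Alpha \<or> v = Beta then -1 else 1"])
       (simp add: sign_vec_def GammaS_perm_Xi_Zeta_Eta_Omega)
qed

theorem theorem9p8:
  fixes x a y b z :: "'a::group_add set"
  shows "Gam b z y x a = neg_set (Gam x a y b z)
       \<and> Gam z b y a x = Gam_check x a y b z
       \<and> Gam a x y z b = neg_set (Gam_check x a y b z)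
       \<and> ((symmetric_set x \<and> symmetric_set a \<and> symmetric_set y \<and> symmetric_set b \<and> symmetric_set z)
            \<longrightarrow> Gam x a y b z = Gam a x y z b)
       \<and> (\<forall>\<sigma>\<in>klein. \<exists>s. sign_vec s \<and> s Xi = 1 \<and> s Zeta = 1 \<and> s Eta = 1 \<and> s Omega = 1
            \<and> (GammaS_perm \<sigma> :: (letter \<Rightarrow> 'a) set) = GammaS_signed s)"
proof (intro conjI impI ballI)
  show "Gam b z y x a = neg_set (Gam x a y b z)"
    by (rule Gam_swap)
  show "Gam z b y a x = Gam_check x a y b z"
    by (rule Gam_check_eq_Gam_reversed [symmetric])
  show "Gam a x y z b = neg_set (Gam_check x a y b z)"
    unfolding Gam_check_eq_Gam_reversed by (rule Gam_swap)
  show "Gam x a y b z = Gam a x y z b"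
    if "symmetric_set x \<and> symmetric_set a \<and> symmetric_set y \<and> symmetric_set b \<and> symmetric_set z"
    using that Gam_transpose_if_symmetric by blast
  show "\<exists>s. sign_vec s \<and> s Xi = 1 \<and> s Zeta = 1 \<and> s Eta = 1 \<and> s Omega = 1
          \<and> (GammaS_perm \<sigma> :: (letter \<Rightarrow> 'a) set) = GammaS_signed s" if "\<sigma> \<in> klein" for \<sigma>
    using that by (rule klein_GammaS_perm_signed)
qed

end
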